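(* Let $\mathcal{L}:\mathbb{R}^d\to\mathbb{R}$ be differentiable and run full-batch MoFO with hyperparameters satisfying $\beta_1<\sqrt{\beta_2}<1$ and $\epsilon=0$ (arbitrary learning rates $\eta_t>0$). Then for every $t\ge1$ and every coordinate $1\le i\le d$, $$|\theta_{i,t}-\theta_{i,t-1}|\le\frac{1}{\sqrt{1-\beta_2}\,(1-\beta_1/\sqrt{\beta_2})}\cdot\eta_t\cdot\texttt{FLT}_\alpha(m_t)_i,$$ and moreover $\|\theta_t-\theta_{t-1}\|_2\le C\eta_t$, where $C=\dfrac{\sqrt{d\cdot(\alpha\%)+B}}{\sqrt{1-\beta_2}\,(1-\beta_1/\sqrt{\beta_2})}$.
   Context: The coordinates of $\mathbb{R}^d$ are partitioned into $B$ blocks of sizes $d_1,\dots,d_B$ with $\sum_kd_k=d$. Fix $\alpha\%\in(0,1]$. For $z\in\mathbb{R}^d$, $\texttt{FLT}_\alpha(z)\in\{0,1\}^d$ equals, in each block $k$, $1$ exactly on a set of $\lceil d_k\cdot\alpha\%\rceil$ indices with the largest absolute values of $z$ within that block (ties broken in favour of smaller indices), and $0$ elsewhere. Full-batch MoFO with $\beta_1,\beta_2\in(0,1)$, learning rates $\eta_t>0$, initial point $\theta_0$: $m_0=v_0=0$; for $t\ge1$, $g_t=\nabla\mathcal{L}(\theta_{t-1})$, $m_t=\beta_1m_{t-1}+(1-\beta_1)g_t$, $v_t=\beta_2v_{t-1}+(1-\beta_2)g_t\odot g_t$, $\hat m_t=m_t/(1-\beta_1^t)$, $\hat v_t=v_t/(1-\beta_2^t)$,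 $\theta_t=\theta_{t-1}-\eta_t(\hat m_t\odot\texttt{FLT}_\alpha(m_t))/\sqrt{\hat v_t}$ entrywise ($\epsilon=0$ means no additive constant in the denominator; a quotient with $\hat v_{i,t}=0$, where necessarily $\hat m_{i,t}=0$, is taken as $0$). Subscript $i,t$ denotes the $i$-th coordinate of the vector at iteration $t$. *)

theory Defs
  imports "HOL-Analysis.Analysis"
begin

text \<open>Coordinates of R^d are the elements of a finite linearly ordered index type 'n
  (d = CARD('n)); the order is used for tie-breaking.  The block partition is given by
  a block-label function blk :: 'n => nat with labels < B; block k = {j. blk j = k}.\<close>

definition grad :: "(real^'n \<Rightarrow> real) \<Rightarrow> real^'n \<Rightarrow> real^'n" where
  "grad L x = (\<chi> i. frechet_derivative L (at x) (axis i 1))"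

definition FLT :: "real \<Rightarrow> ('n::{finite,linorder} \<Rightarrow> nat) \<Rightarrow> real^('n::{finite,linorder}) \<Rightarrow> real^('n::{finite,linorder})" where
  "FLT alpha blk z = (\<chi> i.
     if card {j. blk j = blk i \<and> (\<bar>z$j\<bar> > \<bar>z$i\<bar> \<or> (\<bar>z$j\<bar> = \<bar>z$i\<bar> \<and> j < i))}
          < nat \<lceil>real (card {j. blk j = blk i}) * alpha\<rceil>
     then 1 else 0)"

text \<open>Full-batch MoFO state (theta_t, m_t, v_t).  Division by zero is 0 in Isabelle,
  matching the convention for coordinates with hat v = 0.\<close>
fun mofo :: "(real^('n::{finite,linorder}) \<Rightarrow> real) \<Rightarrow> real \<Rightarrow> real \<Rightarrow> (nat \<Rightarrow> real) \<Rightarrow> real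
      \<Rightarrow> ('n::{finite,linorder} \<Rightarrow> nat) \<Rightarrow> real^('n::{finite,linorder}) \<Rightarrow> nat \<Rightarrow> (real^('n::{finite,linorder})) \<times> (real^('n::{finite,linorder})) \<times> (real^('n::{finite,linorder}))" where
  "mofo L b1 b2 eta alpha blk th0 0 = (th0, 0, 0)"
| "mofo L b1 b2 eta alpha blk th0 (Suc t) =
     (let (th, m, v) = mofo L b1 b2 eta alpha blk th0 t;
          g = grad L th;
          m' = b1 *\<^sub>R m + (1 - b1) *\<^sub>R g;
          v' = (\<chi> i. b2 * v$i + (1 - b2) * (g$i * g$i));
          mh = (\<chi> i. m'$i / (1 - b1 ^ Suc t));
          vh = (\<chi> i. v'$i / (1 - b2 ^ Suc t));
          msk = FLT alpha blk m';
          th' = (\<chi> i. th$i - eta (Suc t) * (mh$i * msk$i) / sqrt (vh$i))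
      in (th', m', v'))"

definition theta where "theta L b1 b2 eta alpha blk th0 t = fst (mofo L b1 b2 eta alpha blk th0 t)"
definition mom where "mom L b1 b2 eta alpha blk th0 t = fst (snd (mofo L b1 b2 eta alpha blk th0 t))"

end

theory Submission
  imports Defs
begin

(* With r = b1 / sqrt b2 < 1, each momentum term satisfies
   b1^k |g_k| = r^k sqrt (b2^k g_k^2) <= r^k sqrt (sum_j b2^j g_j^2), so the momentum is at most
   sqrt of the second moment divided by 1 - r; the bias corrections only help, because
   (1 - b1) / (1 - b1^t) <= 1 and 1 - b2^t <= 1.  Hence every coordinate of the update is at most
   eta_t / (sqrt (1 - b2) (1 - r)) and vanishes off the mask.  The mask selects at most
   ceil (d_k alpha) <= d_k alpha + 1 coordinates of block k, so at most d alpha + B in total,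
   which gives the Euclidean bound. *)

lemma ema_closed_form:
  fixes x y :: "nat \<Rightarrow> real"
  assumes "x 0 = 0" and "\<And>t. x (Suc t) = b * x t + (1 - b) * y t"
  shows "x t = (1 - b) * (\<Sum>k<t. b ^ k * y (t - 1 - k))"
proof (induction t)
  case 0
  then show ?case using assms(1) by simp
next
  case (Suc t)
  have shift: "(\<Sum>k<Suc t. b ^ k * y (Suc t - 1 - k)) = y t + b * (\<Sum>k<t. b ^ k * y (t - 1 - k))"
    unfolding sum.lessThan_Suc_shift by (simp add: sum_distrib_left mult.assoc)
  show ?case unfolding assms(2) Suc.IH shift by (simp add: algebra_simps)
qed

lemma abs_sum_geometric_le:
  fixes g :: "nat \<Rightarrow> real"
  assumes "0 \<le> b1" and "b1 < sqrt b2"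
  shows "\<bar>\<Sum>k<t. b1 ^ k * g k\<bar> \<le> sqrt (\<Sum>k<t. b2 ^ k * (g k)\<^sup>2) / (1 - b1 / sqrt b2)"
proof -
  define r where "r = b1 / sqrt b2"
  define S where "S = sqrt (\<Sum>k<t. b2 ^ k * (g k)\<^sup>2)"
  have sb2: "0 < sqrt b2" using assms by linarith
  have r: "0 \<le> r" "r < 1" using assms sb2 by (auto simp: r_def)
  have S: "0 \<le> S" unfolding S_def using sb2 by (auto intro!: sum_nonneg)
  have term_le: "\<bar>b1 ^ k * g k\<bar> \<le> r ^ k * S" if "k < t" for k
  proof -
    have "b1 ^ k = r ^ k * sqrt b2 ^ k" using sb2 by (simp add: r_def power_divide)
    then have "\<bar>b1 ^ k * g k\<bar> = r ^ k * sqrt (b2 ^ k * (g k)\<^sup>2)"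
      using sb2 r by (simp add: abs_mult real_sqrt_mult real_sqrt_power[of b2])
    also have "sqrt (b2 ^ k * (g k)\<^sup>2) \<le> S"
      unfolding S_def using that sb2 by (intro real_sqrt_le_mono member_le_sum) auto
    finally show ?thesis using r by (simp add: mult_left_mono)
  qed
  have "\<bar>\<Sum>k<t. b1 ^ k * g k\<bar> \<le> (\<Sum>k<t. \<bar>b1 ^ k * g k\<bar>)" by (rule sum_abs)
  also have "\<dots> \<le> (\<Sum>k<t. r ^ k * S)" by (rule sum_mono) (simp add: term_le)
  also have "\<dots> = S * (\<Sum>k<t. r ^ k)" by (simp add: sum_distrib_left mult.commute)
  also have "\<dots> \<le> S * (1 / (1 - r))"
    using r S by (intro mult_left_mono) (auto simp: sum_gp_strict intro!: divide_right_mono)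
  finally show ?thesis by (simp add: S_def r_def)
qed

lemma abs_bias_corrected_ratio_le:
  fixes g :: "nat \<Rightarrow> real"
  assumes "0 \<le> b1" and "b1 < sqrt b2" and "b2 < 1" and "1 \<le> t"
  shows "\<bar>((1 - b1) * (\<Sum>k<t. b1 ^ k * g k) / (1 - b1 ^ t))
            / sqrt ((1 - b2) * (\<Sum>k<t. b2 ^ k * (g k)\<^sup>2) / (1 - b2 ^ t))\<bar>
         \<le> 1 / (sqrt (1 - b2) * (1 - b1 / sqrt b2))"
proof -
  define S where "S = sqrt (\<Sum>k<t. b2 ^ k * (g k)\<^sup>2)"
  have "0 < sqrt b2" using assms by linarith
  then have sb2: "0 < sqrt b2" "sqrt b2 < 1" "0 < b2" using assms by auto
  have b1: "b1 < 1" using assms sb2 by linarith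
  have r: "0 < 1 - b1 / sqrt b2" using assms sb2 by (simp add: field_simps)
  have b1t: "b1 ^ t \<le> b1" using power_decreasing[of 1 t b1] assms b1 by simp
  have b2t: "0 < b2 ^ t" "b2 ^ t < 1" using assms sb2 by (auto simp: power_less_one_iff)
  have "0 \<le> S" unfolding S_def using sb2 by (auto intro!: sum_nonneg)
  show ?thesis
  proof (cases "S = 0")
    case True
    then show ?thesis using assms r unfolding S_def by simp
  next
    case False
    with \<open>0 \<le> S\<close> have S: "0 < S" by simp
    have "sqrt ((1 - b2) * (\<Sum>k<t. b2 ^ k * (g k)\<^sup>2) / (1 - b2 ^ t)) = sqrt (1 - b2) * S / sqrt (1 - b2 ^ t)"
      unfolding S_def by (simp add: real_sqrt_mult real_sqrt_divide)
    then have "\<bar>((1 - b1) * (\<Sum>k<t. b1 ^ k * g k) / (1 - b1 ^ t))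
                 / sqrt ((1 - b2) * (\<Sum>k<t. b2 ^ k * (g k)\<^sup>2) / (1 - b2 ^ t))\<bar>
        = (1 - b1) / (1 - b1 ^ t) * sqrt (1 - b2 ^ t) * \<bar>\<Sum>k<t. b1 ^ k * g k\<bar> / (sqrt (1 - b2) * S)"
      using b1 b1t b2t S assms by (simp add: abs_mult abs_divide)
    also have "\<dots> \<le> 1 * 1 * (S / (1 - b1 / sqrt b2)) / (sqrt (1 - b2) * S)"
      using b1 b1t b2t S assms abs_sum_geometric_le[OF assms(1,2)]
      by (intro divide_right_mono mult_mono) (auto simp: S_def divide_le_eq_1)
    also have "\<dots> = 1 / (sqrt (1 - b2) * (1 - b1 / sqrt b2))" using S by simp
    finally show ?thesis .
  qed
qed

definition flt_rank :: "('n::{finite,linorder} \<Rightarrow> nat) \<Rightarrow> real^'n::{finite,linorder} \<Rightarrow> 'n::{finite,linorder} \<Rightarrow> nat" where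
  "flt_rank blk z i = card {j. blk j = blk i \<and> (\<bar>z$j\<bar> > \<bar>z$i\<bar> \<or> (\<bar>z$j\<bar> = \<bar>z$i\<bar> \<and> j < i))}"

lemma FLT_eq_of_bool_rank:
  "FLT alpha blk z $ i = of_bool (flt_rank blk z i < nat \<lceil>real (card {j. blk j = blk i}) * alpha\<rceil>)"
  by (simp add: FLT_def flt_rank_def)

lemma FLT_eq_0_or_1: "FLT alpha blk z $ i = 0 \<or> FLT alpha blk z $ i = 1"
  by (simp add: FLT_eq_of_bool_rank)

lemma FLT_nonneg: "0 \<le> FLT alpha blk z $ i"
  by (simp add: FLT_eq_of_bool_rank)

lemma inj_on_flt_rank: "inj_on (flt_rank blk z) {i. blk i = k}"
proof (rule inj_onI, rule ccontr)
  fix i j assume i: "i \<in> {i. blk i = k}" and j: "j \<in> {i. blk i = k}"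
    and same_rank: "flt_rank blk z i = flt_rank blk z j" and "i \<noteq> j"
  define beats where "beats a b \<longleftrightarrow> blk a = blk b \<and> (\<bar>z$a\<bar> > \<bar>z$b\<bar> \<or> (\<bar>z$a\<bar> = \<bar>z$b\<bar> \<and> a < b))" for a b
  have rank_less: "flt_rank blk z a < flt_rank blk z b" if "beats a b" for a b
  proof -
    have "{c. beats c a} \<subset> {c. beats c b}"
      using that unfolding beats_def by auto
    then show ?thesis unfolding flt_rank_def beats_def[abs_def] by (intro psubset_card_mono) auto
  qed
  have "beats i j \<or> beats j i" using \<open>i \<noteq> j\<close> i j unfolding beats_def by (auto simp: neq_iff)
  then show False using rank_less same_rank by fastforce
qed

lemma card_flt_rank_less_le: "card {i. blk i = k \<and> flt_rank blk z i < N} \<le> N"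
proof -
  have "card {i. blk i = k \<and> flt_rank blk z i < N} \<le> card {..<N}"
    by (rule card_inj_on_le[OF inj_on_subset[OF inj_on_flt_rank[of blk z k]]]) auto
  then show ?thesis by simp
qed

lemma sum_FLT_le:
  fixes z :: "real^'n::{finite,linorder}"
  assumes "\<And>j. blk j < B" and "0 \<le> alpha"
  shows "(\<Sum>i\<in>UNIV. FLT alpha blk z $ i) \<le> real CARD('n) * alpha + real B"
proof -
  define N where "N k = nat \<lceil>real (card {j. blk j = k}) * alpha\<rceil>" for k
  have blk_range: "blk ` UNIV \<subseteq> {..<B}" using assms(1) by auto
  have "(\<Sum>i\<in>UNIV. FLT alpha blk z $ i) = (\<Sum>k<B. \<Sum>i\<in>{i. blk i = k}. of_bool (flt_rank blk z i < N k))"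
    using sum.group[OF _ _ blk_range, of "\<lambda>i. FLT alpha blk z $ i"]
    by (simp add: FLT_eq_of_bool_rank N_def)
  also have "\<dots> = (\<Sum>k<B. real (card {i. blk i = k \<and> flt_rank blk z i < N k}))"
    by (simp add: Collect_conj_eq)
  also have "\<dots> \<le> (\<Sum>k<B. real (card {j. blk j = k}) * alpha + 1)"
  proof (rule sum_mono)
    fix k
    have "real (card {i. blk i = k \<and> flt_rank blk z i < N k}) \<le> real (N k)"
      using card_flt_rank_less_le by simp
    also have "\<dots> \<le> real (card {j. blk j = k}) * alpha + 1"
      unfolding N_def using assms(2) by (simp add: of_nat_nat ceiling_le_iff)
    finally show "real (card {i. blk i = k \<and> flt_rank blk z i < N k})
                    \<le> real (card {j. blk j = k}) * alpha + 1" .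
  qed
  also have "\<dots> = (\<Sum>k<B. real (card {j. blk j = k})) * alpha + real B"
    by (simp add: sum.distrib sum_distrib_right)
  also have "(\<Sum>k<B. real (card {j. blk j = k})) = real CARD('n)"
    using sum.group[OF _ _ blk_range, of "\<lambda>_. 1::real"] by simp
  finally show ?thesis .
qed

lemma norm_le_of_masked_bound:
  fixes x f :: "real^'n"
  assumes "\<And>i. \<bar>x$i\<bar> \<le> c * f$i" and "\<And>i. f$i = 0 \<or> f$i = 1" and "0 \<le> c"
  shows "norm x \<le> c * sqrt (\<Sum>i\<in>UNIV. f$i)"
proof -
  have "norm x = L2_set (\<lambda>i. \<bar>x$i\<bar>) UNIV" by (simp add: norm_vec_def)
  also have "\<dots> \<le> L2_set (\<lambda>i. c * f$i) UNIV" by (rule L2_set_mono) (use assms(1) in auto)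
  also have "\<dots> = c * L2_set (\<lambda>i. f$i) UNIV" by (simp add: L2_set_right_distrib assms(3))
  also have "(f$i)\<^sup>2 = f$i" for i using assms(2)[of i] by auto
  then have "L2_set (\<lambda>i. f$i) UNIV = sqrt (\<Sum>i\<in>UNIV. f$i)" by (simp add: L2_set_def)
  finally show ?thesis .
qed

definition second_mom :: "(real^'n::{finite,linorder} \<Rightarrow> real) \<Rightarrow> real \<Rightarrow> real \<Rightarrow> (nat \<Rightarrow> real) \<Rightarrow> real
      \<Rightarrow> ('n::{finite,linorder} \<Rightarrow> nat) \<Rightarrow> real^'n::{finite,linorder} \<Rightarrow> nat \<Rightarrow> real^'n::{finite,linorder}" where
  "second_mom L b1 b2 eta alpha blk th0 t = snd (snd (mofo L b1 b2 eta alpha blk th0 t))"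

lemma mofo_0_components:
  "mom L b1 b2 eta alpha blk th0 0 = 0" "second_mom L b1 b2 eta alpha blk th0 0 = 0"
  by (simp_all add: mom_def second_mom_def)

lemma mofo_Suc_components:
  "mom L b1 b2 eta alpha blk th0 (Suc t)
     = b1 *\<^sub>R mom L b1 b2 eta alpha blk th0 t + (1 - b1) *\<^sub>R grad L (theta L b1 b2 eta alpha blk th0 t)"
  "second_mom L b1 b2 eta alpha blk th0 (Suc t) $ i
     = b2 * second_mom L b1 b2 eta alpha blk th0 t $ i + (1 - b2) * (grad L (theta L b1 b2 eta alpha blk th0 t) $ i)\<^sup>2"
  "theta L b1 b2 eta alpha blk th0 (Suc t) $ i = theta L b1 b2 eta alpha blk th0 t $ i
     - eta (Suc t) * (mom L b1 b2 eta alpha blk th0 (Suc t) $ i / (1 - b1 ^ Suc t)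
                      * FLT alpha blk (mom L b1 b2 eta alpha blk th0 (Suc t)) $ i)
       / sqrt (second_mom L b1 b2 eta alpha blk th0 (Suc t) $ i / (1 - b2 ^ Suc t))"
  by (simp_all add: theta_def mom_def second_mom_def Let_def power2_eq_square split: prod.split)

lemma mom_eq_sum:
  "mom L b1 b2 eta alpha blk th0 t $ i
     = (1 - b1) * (\<Sum>k<t. b1 ^ k * grad L (theta L b1 b2 eta alpha blk th0 (t - 1 - k)) $ i)"
  by (rule ema_closed_form) (simp_all add: mofo_0_components mofo_Suc_components)

lemma second_mom_eq_sum:
  "second_mom L b1 b2 eta alpha blk th0 t $ i
     = (1 - b2) * (\<Sum>k<t. b2 ^ k * (grad L (theta L b1 b2 eta alpha blk th0 (t - 1 - k)) $ i)\<^sup>2)"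
  by (rule ema_closed_form[where y = "\<lambda>t. (grad L (theta L b1 b2 eta alpha blk th0 t) $ i)\<^sup>2"])
    (simp_all add: mofo_0_components mofo_Suc_components)

lemma abs_mofo_step_le:
  assumes "0 \<le> b1" and "b1 < sqrt b2" and "b2 < 1" and "0 \<le> eta (Suc s)"
  shows "\<bar>theta L b1 b2 eta alpha blk th0 (Suc s) $ i - theta L b1 b2 eta alpha blk th0 s $ i\<bar>
           \<le> 1 / (sqrt (1 - b2) * (1 - b1 / sqrt b2)) * eta (Suc s)
              * FLT alpha blk (mom L b1 b2 eta alpha blk th0 (Suc s)) $ i"
proof -
  let ?g = "\<lambda>k. grad L (theta L b1 b2 eta alpha blk th0 (s - k)) $ i"
  let ?f = "FLT alpha blk (mom L b1 b2 eta alpha blk th0 (Suc s)) $ i"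
  define ratio where "ratio = ((1 - b1) * (\<Sum>k<Suc s. b1 ^ k * ?g k) / (1 - b1 ^ Suc s))
                         / sqrt ((1 - b2) * (\<Sum>k<Suc s. b2 ^ k * (?g k)\<^sup>2) / (1 - b2 ^ Suc s))"
  have "theta L b1 b2 eta alpha blk th0 (Suc s) $ i - theta L b1 b2 eta alpha blk th0 s $ i
          = - (eta (Suc s) * (mom L b1 b2 eta alpha blk th0 (Suc s) $ i / (1 - b1 ^ Suc s) * ?f)
               / sqrt (second_mom L b1 b2 eta alpha blk th0 (Suc s) $ i / (1 - b2 ^ Suc s)))"
    using mofo_Suc_components(3)[of L b1 b2 eta alpha blk th0 s i] by simp
  also have "\<dots> = - (eta (Suc s) * ?f * ratio)"
    unfolding ratio_def mom_eq_sum second_mom_eq_sum by simp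
  finally have "\<bar>theta L b1 b2 eta alpha blk th0 (Suc s) $ i - theta L b1 b2 eta alpha blk th0 s $ i\<bar>
                  = eta (Suc s) * ?f * \<bar>ratio\<bar>"
    using assms(4) FLT_nonneg[of alpha blk _ i] by (simp add: abs_mult)
  also have "\<dots> \<le> eta (Suc s) * ?f * (1 / (sqrt (1 - b2) * (1 - b1 / sqrt b2)))"
  proof (rule mult_left_mono)
    show "\<bar>ratio\<bar> \<le> 1 / (sqrt (1 - b2) * (1 - b1 / sqrt b2))"
      unfolding ratio_def by (rule abs_bias_corrected_ratio_le[OF assms(1-3)]) simp
  qed (intro mult_nonneg_nonneg assms(4) FLT_nonneg)
  finally show ?thesis by (simp add: mult_ac)
qed

lemma norm_mofo_step_le:
  fixes th0 :: "real^'n::{finite,linorder}"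
  assumes "0 \<le> b1" and "b1 < sqrt b2" and "b2 < 1" and "0 \<le> eta (Suc s)"
    and "\<And>j. blk j < B" and "0 \<le> alpha"
  shows "norm (theta L b1 b2 eta alpha blk th0 (Suc s) - theta L b1 b2 eta alpha blk th0 s)
           \<le> sqrt (real CARD('n) * alpha + real B) / (sqrt (1 - b2) * (1 - b1 / sqrt b2)) * eta (Suc s)"
proof -
  define C where "C = 1 / (sqrt (1 - b2) * (1 - b1 / sqrt b2)) * eta (Suc s)"
  have "0 < sqrt b2" using assms(1,2) by linarith
  with assms(2) have "b1 / sqrt b2 < 1" by simp
  then have "0 \<le> C" unfolding C_def using assms(3,4) by simp
  have "norm (theta L b1 b2 eta alpha blk th0 (Suc s) - theta L b1 b2 eta alpha blk th0 s)
          \<le> C * sqrt (\<Sum>i\<in>UNIV. FLT alpha blk (mom L b1 b2 eta alpha blk th0 (Suc s)) $ i)"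
  proof (rule norm_le_of_masked_bound)
    show "\<bar>(theta L b1 b2 eta alpha blk th0 (Suc s) - theta L b1 b2 eta alpha blk th0 s) $ i\<bar>
            \<le> C * FLT alpha blk (mom L b1 b2 eta alpha blk th0 (Suc s)) $ i" for i
      unfolding C_def vector_minus_component
      by (rule abs_mofo_step_le[where eta = eta and s = s, OF assms(1-4)])
  qed (rule FLT_eq_0_or_1, fact)
  also have "\<dots> \<le> C * sqrt (real CARD('n) * alpha + real B)"
    using sum_FLT_le[where blk = blk, OF assms(5,6)] \<open>0 \<le> C\<close>
    by (intro mult_left_mono real_sqrt_le_mono) auto
  finally show ?thesis by (simp add: C_def mult_ac)
qed

theorem lemma2:
  fixes L :: "real^('n::{finite,linorder}) \<Rightarrow> real"
    and b1 b2 alpha :: real and eta :: "nat \<Rightarrow> real"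
    and blk :: "'n \<Rightarrow> nat" and B :: nat and th0 :: "real^('n::{finite,linorder})"
  assumes "\<And>x. L differentiable (at x)"
    and "0 < b1" and "b1 < sqrt b2" and "0 < b2" and "b2 < 1"
    and "\<And>t. eta t > 0"
    and "0 < alpha" and "alpha \<le> 1"
    and "\<And>j. blk j < B"
  shows "\<forall>t\<ge>1. (\<forall>i. \<bar>theta L b1 b2 eta alpha blk th0 t $ i - theta L b1 b2 eta alpha blk th0 (t - 1) $ i\<bar>
              \<le> 1 / (sqrt (1 - b2) * (1 - b1 / sqrt b2)) * eta t
                 * FLT alpha blk (mom L b1 b2 eta alpha blk th0 t) $ i)
          \<and> norm (theta L b1 b2 eta alpha blk th0 t - theta L b1 b2 eta alpha blk th0 (t - 1))
              \<le> sqrt (real CARD('n) * alpha + real B) / (sqrt (1 - b2) * (1 - b1 / sqrt b2)) * eta t"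
proof (intro allI impI conjI)
  fix t :: nat and i assume "1 \<le> t"
  then obtain s where t: "t = Suc s" by (cases t) auto
  have hyps: "0 \<le> b1" "0 \<le> eta (Suc s)" "0 \<le> alpha" using assms(2,6,7) less_imp_le by auto
  show "\<bar>theta L b1 b2 eta alpha blk th0 t $ i - theta L b1 b2 eta alpha blk th0 (t - 1) $ i\<bar>
          \<le> 1 / (sqrt (1 - b2) * (1 - b1 / sqrt b2)) * eta t * FLT alpha blk (mom L b1 b2 eta alpha blk th0 t) $ i"
    unfolding t using abs_mofo_step_le[where eta = eta and s = s, OF hyps(1) assms(3,5) hyps(2)]
    by simp
  show "norm (theta L b1 b2 eta alpha blk th0 t - theta L b1 b2 eta alpha blk th0 (t - 1))
          \<le> sqrt (real CARD('n) * alpha + real B) / (sqrt (1 - b2) * (1 - b1 / sqrt b2)) * eta t"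
    unfolding t
    using norm_mofo_step_le[where eta = eta and s = s, OF hyps(1) assms(3,5) hyps(2) assms(9) hyps(3)]
    by simp
qed

end
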